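(* For integers $n\ge 2$ and $k\ge 0$, let $$g^{(n-1)}_k(x)=\frac{\mathrm{Wr}\{\sin(\pi x),\sin(2\pi x),\dots,\sin((n-1)\pi x),\sin((n+k)\pi x)\}}{\mathrm{Wr}\{\sin(\pi x),\sin(2\pi x),\dots,\sin((n-1)\pi x)\}},\qquad x\in(0,1).$$ Then $$\int_0^1 \big(g^{(n-1)}_k(x)\big)^2\,dx=\frac{1}{2}\pi^{2n-2}\prod_{i=1}^{n-1}\big((n+k)^2-i^2\big)=\frac{\pi^{2n-2}\,\Gamma(2n+k)}{2\,(n+k)\,k!}.$$
   Context: For smooth functions $f_1,\dots,f_m$ of $x$, $\mathrm{Wr}\{f_1,\dots,f_m\}$ denotes the determinant of the $m\times m$ matrix with $(i,j)$ entry $f_j^{(i-1)}(x)$, derivatives taken with respect to $x$. *)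

theory Defs
  imports "HOL-Analysis.Analysis" "Jordan_Normal_Form.Determinant"
begin

definition wronskian :: "nat \<Rightarrow> (nat \<Rightarrow> real \<Rightarrow> real) \<Rightarrow> real \<Rightarrow> real" where
  "wronskian m fs x = Determinant.det (Matrix.mat m m (\<lambda>(i, j). (deriv ^^ i) (fs j) x))"

definition sin_fam :: "nat \<Rightarrow> real \<Rightarrow> real" where
  "sin_fam j = (\<lambda>x. sin (real (j + 1) * pi * x))"

definition g_fun :: "nat \<Rightarrow> nat \<Rightarrow> real \<Rightarrow> real" where
  "g_fun n k x =
     wronskian n (\<lambda>j. if j < n - 1 then sin_fam j else (\<lambda>x. sin (real (n + k) * pi * x))) x
     / wronskian (n - 1) sin_fam x"

end

theory Submission
  imports Defs "HOL-Computational_Algebra.Polynomial"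
begin

(* Write s = sin (pi x), c = cos (pi x) and U_j for the Chebyshev polynomial of the second kind,
   so that sin ((j + 1) pi x) = s U_j(c). The i-th derivative of s q(c) is a lower triangular
   combination of q(c), q'(c), ..., q^(i)(c) with diagonal coefficient s (-pi s)^i, so every
   Wronskian of such functions is the product of these diagonal terms times det (U_j^(l)(c)),
   and the latter matrix is upper triangular because deg U_j = j. Hence the quotient collapses to
   g = s (-pi s)^(n-1) U_(n+k-1)^(n-1)(c). Differentiating the Chebyshev equation t times and
   integrating by parts gives I_(t+1) = ((n + k)^2 - (t + 1)^2) I_t for
   I_t = integral of s^(2t+2) (U_(n+k-1)^(t)(c))^2 over [0, 1], and I_0 = 1/2. *)

lemma higher_pderiv_eq_0:
  fixes p :: "'a::{comm_semiring_1,semiring_no_zero_divisors,semiring_char_0} poly"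
  assumes "degree p < n"
  shows "(pderiv ^^ n) p = 0"
  by (rule poly_eqI) (use assms in \<open>simp add: coeff_higher_pderiv coeff_eq_0\<close>)

lemma higher_pderiv_degree:
  fixes p :: "'a::{comm_semiring_1,semiring_no_zero_divisors,semiring_char_0} poly"
  shows "(pderiv ^^ degree p) p = [:fact (degree p) * lead_coeff p:]"
proof (rule poly_eqI)
  fix m
  show "coeff ((pderiv ^^ degree p) p) m = coeff [:fact (degree p) * lead_coeff p:] m"
    by (cases m) (simp_all add: coeff_higher_pderiv pochhammer_fact coeff_eq_0)
qed

fun chebyshev_U :: "nat \<Rightarrow> real poly" where
  "chebyshev_U 0 = 1"
| "chebyshev_U (Suc 0) = [:0, 2:]"
| "chebyshev_U (Suc (Suc j)) = [:0, 2:] * chebyshev_U (Suc j) - chebyshev_U j"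

lemma sin_Suc_mult_eq_chebyshev_U: "sin (real (Suc j) * t) = sin t * poly (chebyshev_U j) (cos t)"
proof (induction j rule: chebyshev_U.induct)
  case (3 j)
  have "sin (real (Suc (Suc (Suc j))) * t) + sin (real (Suc j) * t)
      = 2 * cos t * sin (real (Suc (Suc j)) * t)"
    using sin_add[of "real (Suc (Suc j)) * t" t] sin_diff[of "real (Suc (Suc j)) * t" t]
    by (simp add: algebra_simps)
  with 3 show ?case
    by (simp add: algebra_simps)
qed (simp_all add: sin_double)

lemma coeff_chebyshev_U: "coeff (chebyshev_U j) j = 2 ^ j" "j < m \<Longrightarrow> coeff (chebyshev_U j) m = 0"
proof (induction j arbitrary: m rule: chebyshev_U.induct)
  case (3 j)
  have shift: "coeff ([:0, 2:] * p) (Suc m) = 2 * coeff p m" for p :: "real poly" and m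
    by simp
  { case 1 show ?case using 3 by (simp add: shift) }
  { case 2 then obtain m' where "m = Suc m'" "Suc j < m'" by (cases m) auto
    then show ?case using 3 by (simp add: shift) }
qed (auto simp: coeff_pCons split: nat.splits)

lemma degree_chebyshev_U: "degree (chebyshev_U j) = j"
  by (metis coeff_chebyshev_U degree_le le_degree le_antisym power_not_zero zero_neq_numeral)

lemma poly_eq_0_if_sin_mult_poly_cos_eq_0:
  fixes p :: "real poly"
  assumes "\<And>t. sin t * poly p (cos t) = 0"
  shows "p = 0"
proof -
  have "{-1<..<1} \<subseteq> {t. poly p t = 0}"
  proof
    fix t :: real assume "t \<in> {-1<..<1}"
    then show "t \<in> {t. poly p t = 0}"
      using assms[of "arccos t"] sin_arccos_nonzero[of t] by auto
  qed
  moreover have "infinite {-1<..<1::real}"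
    by simp
  ultimately show ?thesis
    using poly_roots_finite finite_subset by blast
qed

lemma chebyshev_U_ode:
  "[:1, 0, -1:] * (pderiv ^^ 2) (chebyshev_U j) - [:0, 3:] * pderiv (chebyshev_U j)
     + Polynomial.smult (real (j * (j + 2))) (chebyshev_U j) = 0"
  (is "?R = 0")
proof (rule poly_eq_0_if_sin_mult_poly_cos_eq_0)
  \<comment> \<open>Differentiate sin ((j + 1) t) = sin t U_j(cos t) twice.\<close>
  fix t :: real
  let ?U = "chebyshev_U j" and ?a = "real (Suc j)"
  define f where "f t = sin t * poly ?U (cos t)" for t
  define f' where "f' t = cos t * poly ?U (cos t) - sin t * sin t * poly (pderiv ?U) (cos t)" for t
  have sin_sq: "sin t * sin t = 1 - cos t * cos t" for t :: real
    by (simp add: sin_squared_eq flip: power2_eq_square)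
  have f_eq: "f = (\<lambda>t. sin (?a * t))"
    by (simp add: f_def fun_eq_iff sin_Suc_mult_eq_chebyshev_U del: of_nat_Suc)
  have "(f has_real_derivative f' t) (at t)" for t
    unfolding f_def f'_def
    by (auto intro!: derivative_eq_intros DERIV_chain2[OF poly_DERIV] simp: algebra_simps)
  moreover have "(f has_real_derivative ?a * cos (?a * t)) (at t)" for t
    unfolding f_eq by (auto intro!: derivative_eq_intros)
  ultimately have f'_eq: "f' = (\<lambda>t. ?a * cos (?a * t))"
    using DERIV_unique by blast
  have "(f' has_real_derivative sin t * poly ?R (cos t) - ?a\<^sup>2 * f t) (at t)"
  proof -
    have "(f' has_real_derivative
        - sin t * poly ?U (cos t) + cos t * (poly (pderiv ?U) (cos t) * - sin t)
        - ((cos t * sin t + sin t * cos t) * poly (pderiv ?U) (cos t)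
           + sin t * sin t * (poly (pderiv (pderiv ?U)) (cos t) * - sin t))) (at t)"
      unfolding f'_def by (auto intro!: derivative_eq_intros DERIV_chain2[OF poly_DERIV])
    moreover have "?a\<^sup>2 = real (j * (j + 2)) + 1"
      by (simp add: power2_eq_square algebra_simps)
    ultimately show ?thesis
      by (simp add: f_def numeral_2_eq_2 algebra_simps sin_sq)
  qed
  moreover have "(f' has_real_derivative - ?a\<^sup>2 * f t) (at t)"
    unfolding f'_eq f_eq by (auto intro!: derivative_eq_intros simp: power2_eq_square)
  ultimately show "sin t * poly ?R (cos t) = 0"
    using DERIV_unique by fastforce
qed

lemma chebyshev_U_higher_ode:
  "[:1, 0, -1:] * (pderiv ^^ Suc (Suc s)) (chebyshev_U j)
     - [:0, real (2 * s + 3):] * (pderiv ^^ Suc s) (chebyshev_U j)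
     + Polynomial.smult ((real (Suc j))\<^sup>2 - (real (Suc s))\<^sup>2) ((pderiv ^^ s) (chebyshev_U j)) = 0"
  (is "?L s = 0")
proof (induction s)
  case 0
  have "(real (Suc j))\<^sup>2 - 1 = real (j * (j + 2))"
    by (simp add: power2_eq_square algebra_simps)
  with chebyshev_U_ode[of j] show ?case
    by (simp add: numeral_2_eq_2 numeral_3_eq_3)
next
  case (Suc s)
  have "poly (?L (Suc s)) t = poly (pderiv (?L s)) t" for t
    by (simp add: pderiv_mult pderiv_add pderiv_diff pderiv_smult pderiv_minus pderiv_pCons
        power2_eq_square algebra_simps)
  then show ?case
    using Suc.IH by (metis pderiv_0 poly_eq_poly_eq_iff ext)
qed

(* A pair (P, R) encodes x \<mapsto> P(cos wx) + sin(wx) R(cos wx); these functions are closed under d/dx. *)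
definition trig_eval :: "real \<Rightarrow> real poly \<times> real poly \<Rightarrow> real \<Rightarrow> real" where
  "trig_eval w A x = poly (fst A) (cos (w * x)) + sin (w * x) * poly (snd A) (cos (w * x))"

definition trig_deriv :: "real \<Rightarrow> real poly \<times> real poly \<Rightarrow> real poly \<times> real poly" where
  "trig_deriv w A =
     (Polynomial.smult w ([:0, 1:] * snd A - [:1, 0, -1:] * pderiv (snd A)),
      Polynomial.smult (- w) (pderiv (fst A)))"

definition trig_mult_sin :: "real \<Rightarrow> real poly \<times> real poly \<Rightarrow> real poly \<times> real poly" where
  "trig_mult_sin a A = (Polynomial.smult a ([:1, 0, -1:] * snd A), Polynomial.smult a (fst A))"

lemma sin_mult_sin_mult: "sin t * (sin t * y) = y - cos t * (cos t * y)" for t y :: real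
  using sin_cos_squared_add3[of t] by (metis add_diff_cancel_left' distrib_right mult.assoc mult_1)

lemma trig_deriv_zero [simp]: "trig_deriv w 0 = 0"
  by (simp add: trig_deriv_def zero_prod_def)

lemma trig_mult_sin_zero [simp]: "trig_mult_sin a 0 = 0"
  by (simp add: trig_mult_sin_def zero_prod_def)

lemma trig_eval_zero [simp]: "trig_eval w 0 x = 0"
  by (simp add: trig_eval_def)

lemma trig_eval_add: "trig_eval w (A + B) x = trig_eval w A x + trig_eval w B x"
  by (simp add: trig_eval_def algebra_simps)

lemma trig_eval_mult_sin: "trig_eval w (trig_mult_sin a A) x = a * sin (w * x) * trig_eval w A x"
  by (simp add: trig_eval_def trig_mult_sin_def algebra_simps sin_mult_sin_mult)

lemma has_real_derivative_trig_eval: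
  "(trig_eval w A has_real_derivative trig_eval w (trig_deriv w A) x) (at x)"
proof -
  have "(trig_eval w A has_real_derivative
      poly (pderiv (fst A)) (cos (w * x)) * (- sin (w * x) * w)
      + (cos (w * x) * w * poly (snd A) (cos (w * x))
         + sin (w * x) * (poly (pderiv (snd A)) (cos (w * x)) * (- sin (w * x) * w)))) (at x)"
    unfolding trig_eval_def by (auto intro!: derivative_eq_intros DERIV_chain2[OF poly_DERIV])
  then show ?thesis
    by (simp add: trig_eval_def trig_deriv_def algebra_simps sin_mult_sin_mult)
qed

(* chain_coeff w i l is the coefficient of q^(l)(cos wx) in the i-th derivative of sin(wx) q(cos wx);
   it does not depend on q. *)
fun chain_coeff :: "real \<Rightarrow> nat \<Rightarrow> nat \<Rightarrow> real poly \<times> real poly" where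
  "chain_coeff w 0 l = (if l = 0 then (0, 1) else 0)"
| "chain_coeff w (Suc i) l =
     trig_deriv w (chain_coeff w i l)
     + (if l = 0 then 0 else trig_mult_sin (- w) (chain_coeff w i (l - 1)))"

lemma chain_coeff_eq_0: "i < l \<Longrightarrow> chain_coeff w i l = 0"
  by (induction i arbitrary: l) auto

lemma trig_eval_chain_coeff_diag:
  "trig_eval w (chain_coeff w i i) x = sin (w * x) * (- w * sin (w * x)) ^ i"
proof (induction i)
  case (Suc i)
  then show ?case
    by (simp add: chain_coeff_eq_0 trig_eval_add trig_eval_mult_sin)
qed (simp add: trig_eval_def)

lemma sum_chain_coeff_Suc:
  "(\<Sum>l\<le>Suc i. trig_eval w (chain_coeff w (Suc i) l) x * Q l)
   = (\<Sum>l\<le>i. trig_eval w (trig_deriv w (chain_coeff w i l)) x * Q l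
                + trig_eval w (trig_mult_sin (- w) (chain_coeff w i l)) x * Q (Suc l))"
proof -
  have "(\<Sum>l\<le>Suc i. trig_eval w (chain_coeff w (Suc i) l) x * Q l)
      = (\<Sum>l\<le>Suc i. trig_eval w (trig_deriv w (chain_coeff w i l)) x * Q l)
        + (\<Sum>l\<le>Suc i. trig_eval w (if l = 0 then 0 else trig_mult_sin (- w) (chain_coeff w i (l - 1))) x * Q l)"
    by (simp add: trig_eval_add distrib_right sum.distrib del: sum.atMost_Suc)
  also have "(\<Sum>l\<le>Suc i. trig_eval w (trig_deriv w (chain_coeff w i l)) x * Q l)
      = (\<Sum>l\<le>i. trig_eval w (trig_deriv w (chain_coeff w i l)) x * Q l)"
    by (simp add: chain_coeff_eq_0)
  also have "(\<Sum>l\<le>Suc i. trig_eval w (if l = 0 then 0 else trig_mult_sin (- w) (chain_coeff w i (l - 1))) x * Q l)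
      = (\<Sum>l\<le>i. trig_eval w (trig_mult_sin (- w) (chain_coeff w i l)) x * Q (Suc l))"
    by (simp add: sum.atMost_Suc_shift del: sum.atMost_Suc)
  finally show ?thesis
    by (simp add: sum.distrib)
qed

lemma higher_deriv_sin_mult_poly_cos:
  "(deriv ^^ i) (\<lambda>x. sin (w * x) * poly q (cos (w * x)))
   = (\<lambda>x. \<Sum>l\<le>i. trig_eval w (chain_coeff w i l) x * poly ((pderiv ^^ l) q) (cos (w * x)))"
proof (induction i)
  case 0
  then show ?case
    by (simp add: trig_eval_def)
next
  case (Suc i)
  show ?case
  proof
    fix x
    let ?T = "\<lambda>l x. trig_eval w (chain_coeff w i l) x * poly ((pderiv ^^ l) q) (cos (w * x))"
    have "((\<lambda>x. \<Sum>l\<le>i. ?T l x) has_real_derivative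
          (\<Sum>l\<le>i. trig_eval w (trig_deriv w (chain_coeff w i l)) x * poly ((pderiv ^^ l) q) (cos (w * x))
             + trig_eval w (trig_mult_sin (- w) (chain_coeff w i l)) x * poly ((pderiv ^^ Suc l) q) (cos (w * x))))
        (at x)"
      by (auto intro!: derivative_eq_intros DERIV_chain2[OF poly_DERIV] has_real_derivative_trig_eval sum.cong
          simp: trig_eval_mult_sin algebra_simps)
    then have "(deriv ^^ Suc i) (\<lambda>x. sin (w * x) * poly q (cos (w * x))) x
        = (\<Sum>l\<le>i. trig_eval w (trig_deriv w (chain_coeff w i l)) x * poly ((pderiv ^^ l) q) (cos (w * x))
             + trig_eval w (trig_mult_sin (- w) (chain_coeff w i l)) x * poly ((pderiv ^^ Suc l) q) (cos (w * x)))"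
      using Suc.IH by (simp add: DERIV_imp_deriv)
    then show "(deriv ^^ Suc i) (\<lambda>x. sin (w * x) * poly q (cos (w * x))) x
        = (\<Sum>l\<le>Suc i. trig_eval w (chain_coeff w (Suc i) l) x * poly ((pderiv ^^ l) q) (cos (w * x)))"
      by (simp only: sum_chain_coeff_Suc)
  qed
qed

lemma wronskian_sin_mult_poly_cos:
  assumes "\<And>j. j < m \<Longrightarrow> fs j = (\<lambda>x. sin (w * x) * poly (p j) (cos (w * x)))"
  shows "wronskian m fs x = (\<Prod>i<m. sin (w * x) * (- w * sin (w * x)) ^ i)
           * Determinant.det (mat m m (\<lambda>(l, j). poly ((pderiv ^^ l) (p j)) (cos (w * x))))"
proof -
  let ?T = "mat m m (\<lambda>(i, l). trig_eval w (chain_coeff w i l) x)"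
  let ?P = "mat m m (\<lambda>(l, j). poly ((pderiv ^^ l) (p j)) (cos (w * x)))"
  have "mat m m (\<lambda>(i, j). (deriv ^^ i) (fs j) x) = ?T * ?P"
  proof (rule eq_matI)
    fix i j assume "i < dim_row (?T * ?P)" "j < dim_col (?T * ?P)"
    then have ij: "i < m" "j < m"
      by auto
    have "(deriv ^^ i) (fs j) x
        = (\<Sum>l\<le>i. trig_eval w (chain_coeff w i l) x * poly ((pderiv ^^ l) (p j)) (cos (w * x)))"
      using assms ij by (simp add: higher_deriv_sin_mult_poly_cos)
    also have "\<dots> = (\<Sum>l<m. trig_eval w (chain_coeff w i l) x * poly ((pderiv ^^ l) (p j)) (cos (w * x)))"
      using ij by (intro sum.mono_neutral_left) (auto simp: chain_coeff_eq_0)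
    finally show "mat m m (\<lambda>(i, j). (deriv ^^ i) (fs j) x) $$ (i, j) = (?T * ?P) $$ (i, j)"
      using ij by (simp add: scalar_prod_def atLeast0LessThan)
  qed auto
  moreover have "Determinant.det ?T = (\<Prod>i<m. sin (w * x) * (- w * sin (w * x)) ^ i)"
    by (subst det_lower_triangular[of m])
      (auto simp: chain_coeff_eq_0 trig_eval_chain_coeff_diag prod_list_diag_prod atLeast0LessThan)
  ultimately show ?thesis
    unfolding wronskian_def by (simp add: det_mult[of _ m])
qed

lemma det_higher_pderiv_mat:
  fixes p :: "nat \<Rightarrow> real poly"
  assumes "\<And>j. j < m - 1 \<Longrightarrow> degree (p j) \<le> j"
  shows "Determinant.det (mat m m (\<lambda>(l, j). poly ((pderiv ^^ l) (p j)) c))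
           = (\<Prod>i<m. poly ((pderiv ^^ i) (p i)) c)"
proof -
  have "(pderiv ^^ l) (p j) = 0" if "j < l" "l < m" for j l
    using assms[of j] that by (intro higher_pderiv_eq_0) linarith
  then have "upper_triangular (mat m m (\<lambda>(l, j). poly ((pderiv ^^ l) (p j)) c))"
    by (auto simp: upper_triangular_def)
  then show ?thesis
    by (subst det_upper_triangular[of _ m]) (auto simp: prod_list_diag_prod atLeast0LessThan)
qed

lemma sin_Suc_mult_pi_eq_chebyshev_U:
  "(\<lambda>x. sin (real (Suc j) * pi * x)) = (\<lambda>x. sin (pi * x) * poly (chebyshev_U j) (cos (pi * x)))"
  using sin_Suc_mult_eq_chebyshev_U[of j] by (simp add: fun_eq_iff mult.assoc del: of_nat_Suc)

lemma sin_fam_eq: "sin_fam j = (\<lambda>x. sin (pi * x) * poly (chebyshev_U j) (cos (pi * x)))"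
  using sin_Suc_mult_pi_eq_chebyshev_U[of j] by (simp add: sin_fam_def)

lemma g_fun_eq:
  assumes "n \<ge> 1" "0 < x" "x < 1"
  shows "g_fun n k x = sin (pi * x) * (- pi * sin (pi * x)) ^ (n - 1)
           * poly ((pderiv ^^ (n - 1)) (chebyshev_U (n + k - 1))) (cos (pi * x))"
proof -
  define c where "c = cos (pi * x)"
  define d where "d i = sin (pi * x) * (- pi * sin (pi * x)) ^ i" for i
  define e where "e i = poly ((pderiv ^^ i) (chebyshev_U i)) c" for i
  define p where "p j = (if j < n - 1 then chebyshev_U j else chebyshev_U (n + k - 1))" for j
  have n: "n = Suc (n - 1)"
    using assms by simp
  have fam: "(if j < n - 1 then sin_fam j else (\<lambda>x. sin (real (n + k) * pi * x)))
      = (\<lambda>x. sin (pi * x) * poly (p j) (cos (pi * x)))" for j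
    using sin_fam_eq sin_Suc_mult_pi_eq_chebyshev_U[of "n + k - 1"] assms by (simp add: p_def)
  have "wronskian n (\<lambda>j. if j < n - 1 then sin_fam j else (\<lambda>x. sin (real (n + k) * pi * x))) x
      = (\<Prod>i<n. d i) * (\<Prod>i<n. poly ((pderiv ^^ i) (p i)) c)"
    by (subst wronskian_sin_mult_poly_cos[where p = p, OF fam], subst det_higher_pderiv_mat)
      (simp_all add: d_def c_def p_def degree_chebyshev_U)
  also have "\<dots> = ((\<Prod>i<n - 1. d i) * (\<Prod>i<n - 1. e i))
      * (d (n - 1) * poly ((pderiv ^^ (n - 1)) (chebyshev_U (n + k - 1))) c)"
    by (subst (1 2) n) (simp add: prod.lessThan_Suc p_def e_def)
  finally have "wronskian n (\<lambda>j. if j < n - 1 then sin_fam j else (\<lambda>x. sin (real (n + k) * pi * x))) x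
      = ((\<Prod>i<n - 1. d i) * (\<Prod>i<n - 1. e i))
      * (d (n - 1) * poly ((pderiv ^^ (n - 1)) (chebyshev_U (n + k - 1))) c)" .
  moreover have "wronskian (n - 1) sin_fam x = (\<Prod>i<n - 1. d i) * (\<Prod>i<n - 1. e i)"
    by (subst wronskian_sin_mult_poly_cos[OF sin_fam_eq], subst det_higher_pderiv_mat)
      (simp_all add: d_def e_def c_def degree_chebyshev_U)
  moreover have "(\<Prod>i<n - 1. d i) \<noteq> 0"
    using assms sin_gt_zero[of "pi * x"] by (simp add: d_def)
  moreover have "(\<Prod>i<n - 1. e i) \<noteq> 0"
    using higher_pderiv_degree[of "chebyshev_U i" for i]
    by (simp add: e_def degree_chebyshev_U coeff_chebyshev_U)
  ultimately show ?thesis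
    unfolding g_fun_def by (simp add: d_def c_def)
qed

lemma has_integral_real_derivative:
  fixes F :: "real \<Rightarrow> real"
  assumes "a \<le> b" "\<And>x. (F has_real_derivative f x) (at x)"
  shows "(f has_integral F b - F a) {a..b}"
  using assms by (intro fundamental_theorem_of_calculus)
    (auto simp flip: has_real_derivative_iff_has_vector_derivative intro: has_field_derivative_at_within)

definition chebyshev_U_integrand :: "nat \<Rightarrow> nat \<Rightarrow> real \<Rightarrow> real" where
  "chebyshev_U_integrand j s x =
     sin (pi * x) ^ (2 * s + 2) * (poly ((pderiv ^^ s) (chebyshev_U j)) (cos (pi * x)))\<^sup>2"

(* The primitive on the left vanishes at 0 and 1: this is the integration by parts behind the
   recurrence for the integrals. *)
lemma chebyshev_U_integrand_reduction:
  "((\<lambda>x. sin (pi * x) ^ (2 * s + 3) * poly ((pderiv ^^ Suc s) (chebyshev_U j)) (cos (pi * x))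
          * poly ((pderiv ^^ s) (chebyshev_U j)) (cos (pi * x)) / pi)
    has_real_derivative
      ((real (Suc j))\<^sup>2 - (real (Suc s))\<^sup>2) * chebyshev_U_integrand j s x
      - chebyshev_U_integrand j (Suc s) x) (at x)"
proof -
  define S where "S = sin (pi * x)"
  define c where "c = cos (pi * x)"
  define P where "P = S ^ (2 * s + 2)"
  define D where "D = (real (Suc j))\<^sup>2 - (real (Suc s))\<^sup>2"
  define q0 where "q0 = poly ((pderiv ^^ s) (chebyshev_U j)) c"
  define q1 where "q1 = poly (pderiv ((pderiv ^^ s) (chebyshev_U j))) c"
  define q2 where "q2 = poly (pderiv (pderiv ((pderiv ^^ s) (chebyshev_U j)))) c"
  have "(1 - c\<^sup>2) * q2 - real (2 * s + 3) * c * q1 + D * q0 = 0"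
    using arg_cong[OF chebyshev_U_higher_ode[of s j], of "\<lambda>p. poly p c"]
    by (simp add: D_def q0_def q1_def q2_def power2_eq_square algebra_simps)
  then have ode: "S\<^sup>2 * q2 = real (2 * s + 3) * c * q1 - D * q0"
    by (simp add: S_def c_def sin_squared_eq algebra_simps)
  have "((\<lambda>x. sin (pi * x) ^ (2 * s + 3) * poly ((pderiv ^^ Suc s) (chebyshev_U j)) (cos (pi * x))
          * poly ((pderiv ^^ s) (chebyshev_U j)) (cos (pi * x)) / pi)
      has_real_derivative real (2 * s + 3) * c * P * q1 * q0 - P * S\<^sup>2 * (q2 * q0 + q1\<^sup>2)) (at x)"
    apply (rule derivative_eq_intros refl DERIV_chain2[OF poly_DERIV])+
    using pi_gt_zero
    by (simp_all add: S_def c_def P_def q0_def q1_def q2_def power_add eval_nat_numeral field_simps)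
  also have "real (2 * s + 3) * c * P * q1 * q0 - P * S\<^sup>2 * (q2 * q0 + q1\<^sup>2)
      = D * P * q0\<^sup>2 - P * S\<^sup>2 * q1\<^sup>2 + P * q0 * (real (2 * s + 3) * c * q1 - D * q0 - S\<^sup>2 * q2)"
    by (simp add: power2_eq_square algebra_simps)
  also have "\<dots> = D * P * q0\<^sup>2 - P * S\<^sup>2 * q1\<^sup>2"
    by (simp add: ode)
  also have "\<dots> = D * chebyshev_U_integrand j s x - chebyshev_U_integrand j (Suc s) x"
    by (simp add: chebyshev_U_integrand_def S_def c_def P_def q0_def q1_def power_add power2_eq_square mult_ac)
  finally show ?thesis
    unfolding D_def .
qed

lemma has_integral_sin_sq:
  assumes "N \<noteq> 0"
  shows "((\<lambda>x. (sin (real N * pi * x))\<^sup>2) has_integral 1/2) {0..1}"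
proof -
  define F where "F x = x / 2 - sin (2 * real N * pi * x) / (4 * real N * pi)" for x
  have deriv: "(F has_real_derivative (sin (real N * pi * x))\<^sup>2) (at x)" for x
  proof -
    have "(F has_real_derivative 1/2 - cos (2 * real N * pi * x) * (2 * real N * pi) / (4 * real N * pi)) (at x)"
      unfolding F_def by (auto intro!: derivative_eq_intros)
    moreover have "cos (2 * real N * pi * x) = 1 - 2 * (sin (real N * pi * x))\<^sup>2"
      using cos_double_sin[of "real N * pi * x"] by (simp add: mult.assoc)
    then have "1/2 - cos (2 * real N * pi * x) * (2 * real N * pi) / (4 * real N * pi)
        = (sin (real N * pi * x))\<^sup>2"
      using assms by (simp add: field_simps)
    ultimately show ?thesis
      by simp
  qed
  have "F 1 - F 0 = 1/2"
    using sin_npi[of "2 * N"] by (simp add: F_def mult.assoc)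
  with has_integral_real_derivative[of 0 1, OF _ deriv] show ?thesis
    by simp
qed

lemma has_integral_chebyshev_U_integrand:
  "(chebyshev_U_integrand j s has_integral 1/2 * (\<Prod>i=1..s. (real (Suc j))\<^sup>2 - (real i)\<^sup>2)) {0..1}"
proof (induction s)
  case 0
  have "chebyshev_U_integrand j 0 = (\<lambda>x. (sin (real (Suc j) * pi * x))\<^sup>2)"
    using sin_Suc_mult_eq_chebyshev_U[of j]
    by (simp add: fun_eq_iff chebyshev_U_integrand_def power_mult_distrib power2_eq_square mult.assoc
        del: of_nat_Suc)
  then show ?case
    using has_integral_sin_sq[of "Suc j"] by simp
next
  case (Suc s)
  let ?D = "(real (Suc j))\<^sup>2 - (real (Suc s))\<^sup>2"
  have "((\<lambda>x. ?D * chebyshev_U_integrand j s x - chebyshev_U_integrand j (Suc s) x) has_integral 0) {0..1}"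
    using has_integral_real_derivative[of 0 1, OF _ chebyshev_U_integrand_reduction]
    by (simp add: power_0_left)
  from has_integral_diff[OF has_integral_mult_right[OF Suc.IH, of ?D] this]
  show ?case
    by (simp add: prod.nat_ivl_Suc' mult_ac)
qed

lemma square_sin_mult_power:
  "(s * (- a * s) ^ m * q)\<^sup>2 = a ^ (2 * m) * (s ^ (2 * m + 2) * q\<^sup>2)" for s a q :: real
proof -
  have "((- a * s) ^ m)\<^sup>2 = a ^ (2 * m) * s ^ (2 * m)"
    by (simp add: power_mult_distrib power_even_eq flip: power_mult)
  moreover have "(s * (- a * s) ^ m * q)\<^sup>2 = s\<^sup>2 * ((- a * s) ^ m)\<^sup>2 * q\<^sup>2"
    by (metis power_mult_distrib)
  ultimately show ?thesis
    by (simp add: power_add power2_eq_square mult_ac)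
qed

lemma prod_sq_diff_mult_fact:
  assumes "m < N"
  shows "(\<Prod>i=1..m. (real N)\<^sup>2 - (real i)\<^sup>2) * real N * fact (N - m - 1) = fact (N + m)"
  using assms
proof (induction m)
  case 0
  then show ?case
    using fact_reduce[of N, where 'a = real] by simp
next
  case (Suc m)
  have "fact (N - m - 1) = real (N - Suc m) * fact (N - Suc m - 1)"
    using Suc.prems fact_reduce[of "N - Suc m", where 'a = real] by simp
  moreover have "(real N)\<^sup>2 - (real (Suc m))\<^sup>2 = real (N - Suc m) * real (N + Suc m)"
    using Suc.prems by (simp add: of_nat_diff power2_eq_square algebra_simps)
  moreover have "(\<Prod>i=1..Suc m. (real N)\<^sup>2 - (real i)\<^sup>2)
      = ((real N)\<^sup>2 - (real (Suc m))\<^sup>2) * (\<Prod>i=1..m. (real N)\<^sup>2 - (real i)\<^sup>2)"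
    by (rule prod.nat_ivl_Suc') simp
  ultimately have "(\<Prod>i=1..Suc m. (real N)\<^sup>2 - (real i)\<^sup>2) * real N * fact (N - Suc m - 1)
      = real (N + Suc m) * ((\<Prod>i=1..m. (real N)\<^sup>2 - (real i)\<^sup>2) * real N * fact (N - m - 1))"
    by (simp only: mult_ac)
  also have "\<dots> = fact (N + Suc m)"
    using Suc by simp
  finally show ?case .
qed

lemma has_integral_g_fun_sq:
  assumes "n \<ge> 1"
  shows "((\<lambda>x. (g_fun n k x)\<^sup>2) has_integral
           1/2 * pi ^ (2 * n - 2) * (\<Prod>i=1..n-1. (real (n + k))\<^sup>2 - (real i)\<^sup>2)) {0<..<1}"
proof -
  have pointwise: "(g_fun n k x)\<^sup>2 = pi ^ (2 * n - 2) * chebyshev_U_integrand (n + k - 1) (n - 1) x"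
    if "x \<in> {0<..<1}" for x
  proof -
    have "2 * (n - 1) = 2 * n - 2"
      by simp
    with that show ?thesis
      by (simp only: g_fun_eq[OF assms] square_sin_mult_power chebyshev_U_integrand_def greaterThanLessThan_iff)
  qed
  have "Suc (n + k - 1) = n + k"
    using assms by simp
  then have "((\<lambda>x. pi ^ (2 * n - 2) * chebyshev_U_integrand (n + k - 1) (n - 1) x) has_integral
      1/2 * pi ^ (2 * n - 2) * (\<Prod>i=1..n-1. (real (n + k))\<^sup>2 - (real i)\<^sup>2)) {0<..<1}"
    using has_integral_mult_right[OF has_integral_chebyshev_U_integrand[of "n + k - 1" "n - 1"],
        of "pi ^ (2 * n - 2)"]
    by (simp add: has_integral_Icc_iff_Ioo mult_ac)
  then show ?thesis
    by (rule has_integral_eq[rotated]) (simp add: pointwise)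
qed

lemma Gamma_eq_prod_sq_diff:
  assumes "n \<ge> 1"
  shows "Gamma (real (2 * n + k)) = (\<Prod>i=1..n-1. (real (n + k))\<^sup>2 - (real i)\<^sup>2) * real (n + k) * fact k"
proof -
  have "Gamma (real (2 * n + k)) = fact (n + k + (n - 1))"
    using assms Gamma_fact[of "n + k + (n - 1)", where 'a = real] by (simp add: of_nat_diff)
  moreover have "n + k - (n - 1) - 1 = k"
    using assms by simp
  ultimately show ?thesis
    using prod_sq_diff_mult_fact[of "n - 1" "n + k"] assms by simp
qed

theorem mainTheorem7:
  fixes n k :: nat
  assumes "n \<ge> 2"
  shows "((\<lambda>x. (g_fun n k x)\<^sup>2) has_integral
            (1/2 * pi ^ (2*n - 2) * (\<Prod>i=1..n-1. (real (n + k))\<^sup>2 - (real i)\<^sup>2))) {0<..<1}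
         \<and> 1/2 * pi ^ (2*n - 2) * (\<Prod>i=1..n-1. (real (n + k))\<^sup>2 - (real i)\<^sup>2)
           = pi ^ (2*n - 2) * Gamma (real (2*n + k)) / (2 * real (n + k) * fact k)"
proof
  have "n \<ge> 1"
    using assms by simp
  then show "((\<lambda>x. (g_fun n k x)\<^sup>2) has_integral
      1/2 * pi ^ (2*n - 2) * (\<Prod>i=1..n-1. (real (n + k))\<^sup>2 - (real i)\<^sup>2)) {0<..<1}"
    by (rule has_integral_g_fun_sq)
  show "1/2 * pi ^ (2*n - 2) * (\<Prod>i=1..n-1. (real (n + k))\<^sup>2 - (real i)\<^sup>2)
      = pi ^ (2*n - 2) * Gamma (real (2*n + k)) / (2 * real (n + k) * fact k)"
    unfolding Gamma_eq_prod_sq_diff[OF \<open>n \<ge> 1\<close>] using assms by (simp add: field_simps del: of_nat_add)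
qed

end
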